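(* Let $\mathcal{G}'=(G';T_1',T_2';\theta')\in\mathcal{G}_2^{sym}$ with $\mathcal{G}'\neq\mathcal{K}_1$. Then there exists $\mathcal{G}=(G;T_1,T_2;\theta)\in\mathcal{G}_2^{sym}$ such that $\mathcal{G}'$ is obtained from $\mathcal{G}$ by either a symmetric $2$-tree $0$-extension or a symmetric $2$-tree $1$-extension.
   Context: A multi-graph is finite and loop-free, possibly with parallel edges. A $2$-tree decomposition is $(G;T_1,T_2)$ with $G$ a multi-graph and $T_1,T_2$ spanning trees of $G$ whose edge sets partition $E(G)$. Let $\mathbb{Z}_2=\langle s\rangle$. A $\mathbb{Z}_2$-symmetric multi-graph is a pair $(G,\theta)$ with $\theta:\mathbb{Z}_2\to\mathrm{Aut}(G)$ a non-trivial homomorphism; write $s_\theta=\theta(s)$ and for an edge $e=v_1v_2$, $s_\theta(e)=s_\theta(v_1)s_\theta(v_2)$. A vertex $v$ (edge $e$) is fixed if $s_\theta(v)=v$ ($s_\theta(e)=e$). A symmetric $2$-tree decomposition is $(G;T_1,T_2;\theta)$ where $(G;T_1,T_2)$ is a $2$-tree decomposition, $(G,\theta)$ is $\mathbb{Z}_2$-symmetric and $s_\theta(T_i)=T_i$ for $i=1,2$. $\mathcal{G}_2^{sym}$ denotes the set of symmetric $2$-tree decompositions with no fixed edges, together with $\mathcal{K}_1=(K_1;T_1,T_2;\theta)$ where $K_1$ is a single vertex, the $T_i$ are edgeless and $\theta$ is trivial. For $d\in\{1,2\}$: $(G',\theta')$ is obtained from $(G,\theta)$ by a symmetric $d$-dimensional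 $0$-extension if $V(G')=V(G)\cup\{v,s_{\theta'}(v)\}$ with $v,s_{\theta'}(v)\notin V(G)$ distinct, $s_{\theta'}|_{V(G)}=s_\theta$, and $E(G')=E(G)+\{vv_i,s_{\theta'}(vv_i):i=1,\dots,d\}$ for some not necessarily distinct $v_1,\dots,v_d\in V(G)$; it is obtained by a symmetric $d$-dimensional $1$-extension if the first two conditions hold and there are $v_1,\dots,v_{d+1}\in V(G)$ with $e=v_1v_2\in E(G)$ (otherwise not necessarily distinct) such that $E(G')=E(G)-\{e,s_\theta(e)\}+\{vv_i,s_{\theta'}(vv_i):i=1,\dots,d+1\}$. A symmetric $2$-tree decomposition $(G';T_1',T_2';\theta')$ is obtained from $(G;T_1,T_2;\theta)$ by a symmetric $2$-tree $j$-extension ($j\in\{0,1\}$) if $(G',\theta')$ is obtained from $(G,\theta)$ by a symmetric $2$-dimensional $j$-extension and, for $i=1,2$, $(T_i',\theta')$ is obtained from $(T_i,\theta)$ (with the restricted automorphisms) by a symmetric $1$-dimensional $k_i$-extension with the same new vertices, where $k_i\in\{0,1\}$ and $k_1+k_2=j$. *)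

theory Defs
  imports Main "HOL-Library.Multiset"
begin

text \<open>A multigraph is a finite vertex set V together with a finite multiset E of
  edges; each edge is a 2-element set of vertices (loop-free, parallel edges allowed
  as repeated elements of the multiset).\<close>

definition multigraph :: "'v set \<Rightarrow> 'v set multiset \<Rightarrow> bool" where
  "multigraph V E \<longleftrightarrow> finite V \<and> (\<forall>e\<in>#E. e \<subseteq> V \<and> card e = 2)"

definition connected_mg :: "'v set \<Rightarrow> 'v set multiset \<Rightarrow> bool" where
  "connected_mg V E \<longleftrightarrow>
     (\<forall>x\<in>V. \<forall>y\<in>V. (x, y) \<in> {(a, b). {a, b} \<in># E}\<^sup>*)"

text \<open>A cycle: distinct vertices v_0,...,v_{k-1}, k >= 2, with the edges
  v_i v_{i+1 mod k} (counted with multiplicity) all in E. For k = 2 this is a pair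
  of parallel edges.\<close>

definition has_cycle :: "'v set multiset \<Rightarrow> bool" where
  "has_cycle E \<longleftrightarrow> (\<exists>vs. length vs \<ge> 2 \<and> distinct vs \<and>
     mset (map (\<lambda>i. {vs ! i, vs ! ((i + 1) mod length vs)}) [0..<length vs]) \<subseteq># E)"

definition is_tree :: "'v set \<Rightarrow> 'v set multiset \<Rightarrow> bool" where
  "is_tree V T \<longleftrightarrow> multigraph V T \<and> V \<noteq> {} \<and> connected_mg V T \<and> \<not> has_cycle T"

definition spanning_tree :: "'v set \<Rightarrow> 'v set multiset \<Rightarrow> 'v set multiset \<Rightarrow> bool" where
  "spanning_tree V E T \<longleftrightarrow> T \<subseteq># E \<and> is_tree V T"

definition two_tree_decomp ::
  "'v set \<Rightarrow> 'v set multiset \<Rightarrow> 'v set multiset \<Rightarrow> 'v set multiset \<Rightarrow> bool" where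
  "two_tree_decomp V E T1 T2 \<longleftrightarrow> multigraph V E \<and>
     spanning_tree V E T1 \<and> spanning_tree V E T2 \<and> T1 + T2 = E"

abbreviation edge_img :: "('v \<Rightarrow> 'v) \<Rightarrow> 'v set \<Rightarrow> 'v set" where
  "edge_img s e \<equiv> s ` e"

definition automorphism :: "'v set \<Rightarrow> 'v set multiset \<Rightarrow> ('v \<Rightarrow> 'v) \<Rightarrow> bool" where
  "automorphism V E s \<longleftrightarrow> bij_betw s V V \<and> image_mset (edge_img s) E = E"

text \<open>A Z_2-symmetric multigraph (G,theta): theta is determined by s_theta = theta(s),
  which must be an automorphism with s_theta^2 = id (homomorphism from Z_2) and
  s_theta \<noteq> id (non-trivial). Only the values of s on V are relevant.\<close>

definition z2_symmetric :: "'v set \<Rightarrow> 'v set multiset \<Rightarrow> ('v \<Rightarrow> 'v) \<Rightarrow> bool" where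
  "z2_symmetric V E s \<longleftrightarrow> multigraph V E \<and> automorphism V E s \<and>
     (\<forall>x\<in>V. s (s x) = x) \<and> (\<exists>x\<in>V. s x \<noteq> x)"

text \<open>A (symmetric) 2-tree decomposition is a tuple (V(G), E(G), E(T1), E(T2), s_theta).\<close>

type_synonym 'v s2td = "'v set \<times> 'v set multiset \<times> 'v set multiset \<times> 'v set multiset \<times> ('v \<Rightarrow> 'v)"

fun sym_2td :: "'v s2td \<Rightarrow> bool" where
  "sym_2td (V, E, T1, T2, s) \<longleftrightarrow> two_tree_decomp V E T1 T2 \<and> z2_symmetric V E s \<and>
     image_mset (edge_img s) T1 = T1 \<and> image_mset (edge_img s) T2 = T2"

definition no_fixed_edges :: "'v set multiset \<Rightarrow> ('v \<Rightarrow> 'v) \<Rightarrow> bool" where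
  "no_fixed_edges E s \<longleftrightarrow> (\<forall>e\<in>#E. edge_img s e \<noteq> e)"

fun is_K1 :: "'v s2td \<Rightarrow> bool" where
  "is_K1 (V, E, T1, T2, s) \<longleftrightarrow> (\<exists>x. V = {x}) \<and> E = {#} \<and> T1 = {#} \<and> T2 = {#} \<and>
     (\<forall>x\<in>V. s x = x)"

fun in_G2sym :: "'v s2td \<Rightarrow> bool" where
  "in_G2sym (V, E, T1, T2, s) \<longleftrightarrow>
     (sym_2td (V, E, T1, T2, s) \<and> no_fixed_edges E s) \<or> is_K1 (V, E, T1, T2, s)"

text \<open>Symmetric d-dimensional 0-extension from (V,E,s) to (V',E',s') with new vertex v
  (the other new vertex being s' v); vs = [v_1,...,v_d].\<close>

definition sym_ext0 :: "nat \<Rightarrow> 'v \<Rightarrow> 'v set \<Rightarrow> 'v set multiset \<Rightarrow> ('v \<Rightarrow> 'v)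
    \<Rightarrow> 'v set \<Rightarrow> 'v set multiset \<Rightarrow> ('v \<Rightarrow> 'v) \<Rightarrow> bool" where
  "sym_ext0 d v V E s V' E' s' \<longleftrightarrow>
     v \<notin> V \<and> s' v \<notin> V \<and> v \<noteq> s' v \<and> V' = V \<union> {v, s' v} \<and> (\<forall>x\<in>V. s' x = s x) \<and>
     (\<exists>vs. length vs = d \<and> set vs \<subseteq> V \<and>
        E' = E + sum_list (map (\<lambda>u. {#{v, u}, edge_img s' {v, u}#}) vs))"

text \<open>Symmetric d-dimensional 1-extension; vs = [v_1,...,v_{d+1}], e = v_1 v_2 in E.\<close>

definition sym_ext1 :: "nat \<Rightarrow> 'v \<Rightarrow> 'v set \<Rightarrow> 'v set multiset \<Rightarrow> ('v \<Rightarrow> 'v)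
    \<Rightarrow> 'v set \<Rightarrow> 'v set multiset \<Rightarrow> ('v \<Rightarrow> 'v) \<Rightarrow> bool" where
  "sym_ext1 d v V E s V' E' s' \<longleftrightarrow>
     v \<notin> V \<and> s' v \<notin> V \<and> v \<noteq> s' v \<and> V' = V \<union> {v, s' v} \<and> (\<forall>x\<in>V. s' x = s x) \<and>
     (\<exists>vs. length vs = d + 1 \<and> set vs \<subseteq> V \<and> {vs ! 0, vs ! 1} \<in># E \<and>
        E' = E - {#{vs ! 0, vs ! 1}, edge_img s {vs ! 0, vs ! 1}#}
               + sum_list (map (\<lambda>u. {#{v, u}, edge_img s' {v, u}#}) vs))"

definition sym_ext :: "nat \<Rightarrow> nat \<Rightarrow> 'v \<Rightarrow> 'v set \<Rightarrow> 'v set multiset \<Rightarrow> ('v \<Rightarrow> 'v)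
    \<Rightarrow> 'v set \<Rightarrow> 'v set multiset \<Rightarrow> ('v \<Rightarrow> 'v) \<Rightarrow> bool" where
  "sym_ext j d v V E s V' E' s' \<longleftrightarrow>
     (j = 0 \<and> sym_ext0 d v V E s V' E' s') \<or> (j = 1 \<and> sym_ext1 d v V E s V' E' s')"

fun sym_2tree_ext :: "nat \<Rightarrow> 'v s2td \<Rightarrow> 'v s2td \<Rightarrow> bool" where
  "sym_2tree_ext j (V, E, T1, T2, s) (V', E', T1', T2', s') \<longleftrightarrow>
     (\<exists>v k1 k2. k1 \<in> {0, 1} \<and> k2 \<in> {0, 1} \<and> k1 + k2 = j \<and>
        sym_ext j 2 v V E s V' E' s' \<and>
        sym_ext k1 1 v V T1 s V' T1' s' \<and>
        sym_ext k2 1 v V T2 s V' T2' s')"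

end

theory Submission
  imports Defs
begin

text \<open>The two spanning trees have 2|V| - 2 edges together, so some vertex v has total
  degree at most 3. It is not fixed by s: a fixed vertex meets the two distinct edges e and
  s e in each tree. Hence v has degree 1 in one tree and degree 1 or 2 in the other.
  Deleting v and s v removes the orbits of edges at v; where v has degree 2, with neighbours
  a and b, the paths a v b and (s a) (s v) (s b) are replaced by the orbit of a new edge ab.
  What remains is again a pair of s-invariant spanning trees without fixed edges, and the
  deletion is undone by a symmetric 2-tree 0- or 1-extension.\<close>

abbreviation adjacent :: "'v set multiset \<Rightarrow> ('v \<times> 'v) set" where
  "adjacent T \<equiv> {(a, b). {a, b} \<in># T}"

abbreviation edge_orbit :: "('v \<Rightarrow> 'v) \<Rightarrow> 'v set \<Rightarrow> 'v set multiset" where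
  "edge_orbit s e \<equiv> {#e, s ` e#}"

definition degree :: "'v set multiset \<Rightarrow> 'v \<Rightarrow> nat" where
  "degree T x = size (filter_mset (\<lambda>e. x \<in> e) T)"

lemma sum_degree_eq_twice_size:
  assumes "finite V" "\<forall>e\<in>#T. e \<subseteq> V \<and> card e = 2"
  shows "(\<Sum>x\<in>V. degree T x) = 2 * size T"
  using assms(2)
proof (induction T)
  case empty
  then show ?case by (simp add: degree_def)
next
  case (add e T)
  have "(\<Sum>x\<in>V. (if x \<in> e then 1 else 0::nat)) = card (V \<inter> e)"
    using assms(1) by (simp add: sum.If_cases)
  also have "V \<inter> e = e" using add.prems by auto
  finally have "(\<Sum>x\<in>V. (if x \<in> e then 1 else 0::nat)) = 2" using add.prems by simp
  moreover have "degree (add_mset e T) x = degree T x + (if x \<in> e then 1 else 0)" for x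
    by (simp add: degree_def)
  ultimately show ?case using add by (simp add: sum.distrib)
qed

lemma size_eq_size_avoiding_plus_degree:
  "size T = size (filter_mset (\<lambda>e. x \<notin> e) T) + degree T x"
  unfolding degree_def by (metis add.commute size_union multiset_partition)

lemma two_le_size_if_distinct_members:
  assumes "a \<in># M" "b \<in># M" "a \<noteq> b"
  shows "2 \<le> size M"
proof -
  have "{#a, b#} \<subseteq># M" using assms
    by (simp add: insert_subset_eq_iff in_diff_count)
  then show ?thesis using size_mset_mono by fastforce
qed

lemma degree_ge_2_if_fixed:
  assumes "image_mset ((`) s) T = T" "\<forall>e\<in>#T. s ` e \<noteq> e" "s x = x" "1 \<le> degree T x"
  shows "2 \<le> degree T x"
proof -
  obtain e where e: "e \<in># filter_mset (\<lambda>e. x \<in> e) T"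
    using assms(4) by (metis degree_def multiset_nonemptyE not_one_le_zero size_empty)
  then have "s ` e \<in># image_mset ((`) s) T" by auto
  then have "s ` e \<in># filter_mset (\<lambda>e. x \<in> e) T" using e assms(1,3) by force
  moreover have "s ` e \<noteq> e" using assms(2) e by auto
  ultimately show ?thesis unfolding degree_def using e two_le_size_if_distinct_members by metis
qed

lemma mset_subseteq_if_distinct:
  assumes "distinct xs" "set xs \<subseteq> set_mset M"
  shows "mset xs \<subseteq># M"
proof (rule mset_subset_eqI)
  fix x show "count (mset xs) x \<le> count M x"
    using assms by (cases "x \<in> set xs") (auto simp: distinct_count_atmost_1)
qed

lemma subseteq_add_single_if_notin:
  assumes "A \<subseteq># M + {#e#}" "e \<notin># A"
  shows "A \<subseteq># M"
proof (rule mset_subset_eqI)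
  fix d
  have "count A d \<le> count (M + {#e#}) d" using assms(1) by (simp add: subseteq_mset_def)
  then show "count A d \<le> count M d" using assms(2) by (cases "d = e") (auto simp: not_in_iff)
qed

lemma mset_rotate: "mset (rotate n xs) = mset xs"
proof (induction n)
  case (Suc n)
  then show ?case by (cases "rotate n xs") auto
qed simp

lemma card2_other_element: "card e = 2 \<Longrightarrow> l \<in> e \<Longrightarrow> \<exists>z. e = {l, z} \<and> z \<noteq> l"
  by (auto simp: card_2_iff doubleton_eq_iff)

definition walk :: "'v set multiset \<Rightarrow> 'v list \<Rightarrow> bool" where
  "walk T ps \<longleftrightarrow> (\<forall>i. Suc i < length ps \<longrightarrow> {ps ! i, ps ! Suc i} \<in># T)"

definition path_edges :: "'v list \<Rightarrow> 'v set list" where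
  "path_edges ds = map (\<lambda>j. {ds ! j, ds ! (j + 1)}) [0..<length ds - 1]"

definition cycle_edges :: "'v list \<Rightarrow> 'v set list" where
  "cycle_edges vs = map (\<lambda>i. {vs ! i, vs ! ((i + 1) mod length vs)}) [0..<length vs]"

lemma has_cycle_iff_cycle_edges:
  "has_cycle E \<longleftrightarrow> (\<exists>vs. 2 \<le> length vs \<and> distinct vs \<and> mset (cycle_edges vs) \<subseteq># E)"
  unfolding has_cycle_def cycle_edges_def by simp

lemma has_cycle_mono: "has_cycle A \<Longrightarrow> A \<subseteq># B \<Longrightarrow> has_cycle B"
  unfolding has_cycle_def using subset_mset.order_trans by blast

lemma has_cycle_if_parallel_edges:
  assumes "x \<noteq> y" "{#{x, y}, {x, y}#} \<subseteq># T"
  shows "has_cycle T"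
  unfolding has_cycle_iff_cycle_edges
  using assms by (intro exI[of _ "[x, y]"]) (simp add: cycle_edges_def insert_commute)

lemma distinct_cycle_edges:
  assumes "distinct vs" "3 \<le> length vs"
  shows "distinct (cycle_edges vs)"
proof -
  let ?m = "length vs"
  have "{vs ! i, vs ! ((i + 1) mod ?m)} \<noteq> {vs ! j, vs ! ((j + 1) mod ?m)}"
    if ij: "i < ?m" "j < ?m" "i \<noteq> j" for i j
  proof
    assume eq: "{vs ! i, vs ! ((i + 1) mod ?m)} = {vs ! j, vs ! ((j + 1) mod ?m)}"
    have "vs ! i \<noteq> vs ! j" using assms(1) ij by (simp add: nth_eq_iff_index_eq)
    then have "vs ! i = vs ! ((j + 1) mod ?m)" "vs ! ((i + 1) mod ?m) = vs ! j"
      using eq by (auto simp: doubleton_eq_iff)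
    moreover have "0 < ?m" using ij(1) by linarith
    then have "(i + 1) mod ?m < ?m" "(j + 1) mod ?m < ?m" by simp_all
    ultimately have "i = (j + 1) mod ?m" "(i + 1) mod ?m = j"
      using assms(1) ij by (auto simp: nth_eq_iff_index_eq)
    then have "i = ((i + 1) mod ?m + 1) mod ?m" by simp
    also have "\<dots> = (i + 2) mod ?m" by (simp add: mod_simps)
    finally show False using ij(1) assms(2) by (cases "i + 2 < ?m") (auto simp: mod_if split: if_splits)
  qed
  then show ?thesis unfolding cycle_edges_def distinct_conv_nth by auto
qed

lemma has_cycle_if_closed_walk:
  assumes "distinct cs" "3 \<le> length cs" "walk T cs" "{last cs, hd cs} \<in># T"
  shows "has_cycle T"
  unfolding has_cycle_iff_cycle_edges
proof (intro exI conjI)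
  show "2 \<le> length cs" "distinct cs" using assms by auto
  have "e \<in># T" if e: "e \<in> set (cycle_edges cs)" for e
  proof -
    obtain i where i: "i < length cs" "e = {cs ! i, cs ! ((i + 1) mod length cs)}"
      using e by (auto simp: cycle_edges_def)
    show ?thesis
    proof (cases "Suc i < length cs")
      case True
      then show ?thesis using i assms(3) by (simp add: walk_def)
    next
      case False
      then have "Suc i = length cs" using i(1) by simp
      then have "i = length cs - 1" "(i + 1) mod length cs = 0" by auto
      moreover have "cs \<noteq> []" using assms(2) by auto
      ultimately show ?thesis using i assms(4) by (simp add: last_conv_nth hd_conv_nth)
    qed
  qed
  then show "mset (cycle_edges cs) \<subseteq># T"
    using mset_subseteq_if_distinct distinct_cycle_edges assms(1,2) by blast
qed

lemma cycle_edges_rotate: "cycle_edges (rotate k cs) = rotate k (cycle_edges cs)"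
proof (rule nth_equalityI)
  show "length (cycle_edges (rotate k cs)) = length (rotate k (cycle_edges cs))"
    by (simp add: cycle_edges_def)
  fix n assume "n < length (cycle_edges (rotate k cs))"
  then have n: "n < length cs" by (simp add: cycle_edges_def)
  then have m: "cs \<noteq> []" by auto
  let ?m = "length cs"
  have "cycle_edges (rotate k cs) ! n
      = {cs ! ((k + n) mod ?m), cs ! ((k + (n + 1) mod ?m) mod ?m)}"
    using n m by (simp add: cycle_edges_def nth_rotate)
  also have "(k + (n + 1) mod ?m) mod ?m = ((k + n) mod ?m + 1) mod ?m"
    by (simp add: mod_simps add.assoc)
  also have "{cs ! ((k + n) mod ?m), cs ! (((k + n) mod ?m + 1) mod ?m)}
      = rotate k (cycle_edges cs) ! n"
    using n m by (simp add: cycle_edges_def nth_rotate)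
  finally show "cycle_edges (rotate k cs) ! n = rotate k (cycle_edges cs) ! n" .
qed

lemma cycle_edges_eq_path_edges:
  assumes "ds \<noteq> []"
  shows "cycle_edges ds = path_edges ds @ [{last ds, hd ds}]"
proof -
  let ?m = "length ds"
  have "[0..<?m] = [0..<?m - 1] @ [?m - 1]"
    using assms by (metis Suc_diff_1 length_greater_0_conv upt_Suc_append zero_le)
  moreover have "map (\<lambda>i. {ds ! i, ds ! ((i + 1) mod ?m)}) [0..<?m - 1] = path_edges ds"
    unfolding path_edges_def by (rule map_cong) auto
  ultimately show ?thesis
    using assms by (simp add: cycle_edges_def last_conv_nth hd_conv_nth)
qed

lemma path_edges_snoc:
  assumes "ds \<noteq> []"
  shows "path_edges (ds @ [z]) = path_edges ds @ [{last ds, z}]"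
proof -
  let ?m = "length ds"
  have "[0..<?m] = [0..<?m - 1] @ [?m - 1]"
    using assms by (metis Suc_diff_1 length_greater_0_conv upt_Suc_append zero_le)
  moreover have "map (\<lambda>j. {(ds @ [z]) ! j, (ds @ [z]) ! (j + 1)}) [0..<?m - 1] = path_edges ds"
    unfolding path_edges_def by (rule map_cong) (auto simp: nth_append)
  ultimately show ?thesis
    using assms by (simp add: path_edges_def nth_append last_conv_nth)
qed

lemma cycle_through_subdivision:
  assumes "2 \<le> length cs" "distinct cs" "mset (cycle_edges cs) \<subseteq># M + {#{x, y}#}"
    and "z \<notin> set cs"
  shows "\<exists>cs'. 2 \<le> length cs' \<and> distinct cs' \<and> set cs' \<subseteq> insert z (set cs) \<and>
    mset (cycle_edges cs') \<subseteq># M + {#{z, x}, {z, y}#}"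
proof (cases "{x, y} \<in># mset (cycle_edges cs)")
  case False
  then have "mset (cycle_edges cs) \<subseteq># M"
    using subseteq_add_single_if_notin[OF assms(3)] by simp
  then have "mset (cycle_edges cs) \<subseteq># M + {#{z, x}, {z, y}#}"
    by (rule subset_mset.add_increasing2[rotated]) simp
  then show ?thesis using assms(1,2) by (intro exI[of _ cs]) auto
next
  case True
  let ?m = "length cs"
  from True obtain i where i: "i < ?m" "{cs ! i, cs ! ((i + 1) mod ?m)} = {x, y}"
    by (auto simp: cycle_edges_def)
  \<comment> \<open>rotate the cycle so that the edge xy closes it\<close>
  define ds where "ds = rotate (Suc i) cs"
  have ds: "ds \<noteq> []" "distinct ds" "set ds = set cs" "length ds = ?m"
    using assms(1,2) by (auto simp: ds_def)
  have "last ds = cs ! i"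
  proof -
    have "last ds = ds ! (?m - 1)" using ds(1,4) by (simp add: last_conv_nth)
    also have "\<dots> = cs ! ((Suc i + (?m - 1)) mod ?m)"
      unfolding ds_def using assms(1) by (intro nth_rotate) simp
    also have "Suc i + (?m - 1) = i + ?m" using assms(1) by simp
    also have "(i + ?m) mod ?m = i" using i(1) by simp
    finally show ?thesis .
  qed
  moreover have "hd ds = cs ! ((i + 1) mod ?m)"
    using ds(1) nth_rotate[of 0 cs "Suc i"] by (simp add: hd_conv_nth ds_def)
  ultimately have xy: "{last ds, hd ds} = {x, y}" using i(2) by simp
  have "mset (cycle_edges ds) = mset (cycle_edges cs)"
    by (simp only: ds_def cycle_edges_rotate mset_rotate)
  then have "mset (path_edges ds) + {#{x, y}#} \<subseteq># M + {#{x, y}#}"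
    using assms(3) cycle_edges_eq_path_edges[OF ds(1)] xy by simp
  then have "mset (path_edges ds) \<subseteq># M" by simp
  moreover have "{#{last ds, z}, {z, hd ds}#} = {#{z, x}, {z, y}#}"
    using xy by (auto simp: doubleton_eq_iff insert_commute add_mset_commute)
  ultimately have "mset (cycle_edges (ds @ [z])) \<subseteq># M + {#{z, x}, {z, y}#}"
    using ds(1) by (simp add: cycle_edges_eq_path_edges path_edges_snoc)
  moreover have "distinct (ds @ [z])" "set (ds @ [z]) \<subseteq> insert z (set cs)"
    "2 \<le> length (ds @ [z])"
    using ds assms(1,4) by auto
  ultimately show ?thesis by blast
qed

lemma set_subset_if_cycle_edges_subseteq:
  assumes "mset (cycle_edges cs) \<subseteq># T" "\<forall>e\<in>#T. e \<subseteq> W"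
  shows "set cs \<subseteq> W"
proof
  fix x assume "x \<in> set cs"
  then obtain i where i: "i < length cs" "cs ! i = x" by (auto simp: in_set_conv_nth)
  then have "{cs ! i, cs ! ((i + 1) mod length cs)} \<in># mset (cycle_edges cs)"
    by (auto simp: cycle_edges_def)
  then have "{cs ! i, cs ! ((i + 1) mod length cs)} \<in># T" by (rule mset_subset_eqD[OF assms(1)])
  then show "x \<in> W" using assms(2) i(2) by blast
qed

lemma connected_mg_restrict:
  assumes conn: "connected_mg V T" and edges: "\<forall>e\<in>#T. e \<subseteq> V" and "W \<subseteq> V"
    and inner: "\<And>p q. p \<in> W \<Longrightarrow> q \<in> W \<Longrightarrow> {p, q} \<in># T \<Longrightarrow> (p, q) \<in> (adjacent Tr)\<^sup>*"
    and bypass: "\<And>p q z. p \<in> W \<Longrightarrow> q \<in> W \<Longrightarrow> z \<in> V - W \<Longrightarrow> {p, z} \<in># T \<Longrightarrow> {z, q} \<in># T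
       \<Longrightarrow> (p, q) \<in> (adjacent Tr)\<^sup>*"
    and outer: "\<And>z1 z2. z1 \<in> V - W \<Longrightarrow> z2 \<in> V - W \<Longrightarrow> {z1, z2} \<notin># T"
  shows "connected_mg W Tr"
  unfolding connected_mg_def
proof (intro ballI)
  fix x y assume x: "x \<in> W" and y: "y \<in> W"
  have "(x, y) \<in> (adjacent T)\<^sup>*" using conn x y \<open>W \<subseteq> V\<close> unfolding connected_mg_def by blast
  \<comment> \<open>along a T-walk from x, every vertex outside W is a dead end next to the last vertex in W\<close>
  then have "(y \<in> W \<longrightarrow> (x, y) \<in> (adjacent Tr)\<^sup>*) \<and>
        (y \<notin> W \<longrightarrow> (\<exists>p\<in>W. {p, y} \<in># T \<and> (x, p) \<in> (adjacent Tr)\<^sup>*))"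
  proof (induction rule: rtrancl_induct)
    case base
    then show ?case using x by simp
  next
    case (step y z)
    then have yz: "{y, z} \<in># T" by simp
    then have "y \<in> V" "z \<in> V" using edges by auto
    show ?case
    proof (cases "y \<in> W")
      case True
      then have "(x, y) \<in> (adjacent Tr)\<^sup>*" using step.IH by blast
      then show ?thesis using inner[OF True _ yz] True yz by (cases "z \<in> W") auto
    next
      case False
      then obtain p where p: "p \<in> W" "{p, y} \<in># T" "(x, p) \<in> (adjacent Tr)\<^sup>*"
        using step.IH by blast
      have "z \<in> W" using outer[of y z] False \<open>y \<in> V\<close> \<open>z \<in> V\<close> yz by blast
      then have "(p, z) \<in> (adjacent Tr)\<^sup>*" using bypass[OF p(1) _ _ p(2) yz] False \<open>y \<in> V\<close> by blast
      then show ?thesis using p(3) \<open>z \<in> W\<close> by simp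
    qed
  qed
  then show "(x, y) \<in> (adjacent Tr)\<^sup>*" using y by blast
qed

lemma connected_mg_edge_at:
  assumes "connected_mg V T" "x \<in> V" "y \<in> V" "x \<noteq> y"
  shows "\<exists>z. {x, z} \<in># T"
proof -
  have "(x, y) \<in> (adjacent T)\<^sup>*" using assms unfolding connected_mg_def by blast
  then show ?thesis using assms(4) by (cases rule: converse_rtranclE) auto
qed

lemma exists_other_vertex:
  assumes "2 \<le> card V" "x \<in> V"
  shows "\<exists>y\<in>V. y \<noteq> x"
proof -
  have "\<not> V \<subseteq> {x}" using card_mono[of "{x}" V] assms(1) by fastforce
  then show ?thesis by blast
qed

lemma tree_degree_ge_1:
  assumes "is_tree V T" "x \<in> V" "2 \<le> card V"
  shows "1 \<le> degree T x"
proof -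
  have "connected_mg V T" using assms(1) by (simp add: is_tree_def)
  obtain y where "y \<in> V" "y \<noteq> x" using exists_other_vertex[OF assms(3,2)] by blast
  then obtain z where "{x, z} \<in># filter_mset (\<lambda>e. x \<in> e) T"
    using connected_mg_edge_at[OF \<open>connected_mg V T\<close> assms(2)] by fastforce
  then have "size (filter_mset (\<lambda>e. x \<in> e) T) \<noteq> 0" by auto
  then show ?thesis unfolding degree_def by linarith
qed

lemma walk_snoc:
  assumes "walk T ps" "ps \<noteq> []" "{last ps, z} \<in># T"
  shows "walk T (ps @ [z])"
  unfolding walk_def
proof (intro allI impI)
  fix i assume i: "Suc i < length (ps @ [z])"
  show "{(ps @ [z]) ! i, (ps @ [z]) ! Suc i} \<in># T"
  proof (cases "Suc i < length ps")
    case True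
    then show ?thesis using assms(1) by (simp add: walk_def nth_append)
  next
    case False
    then have "i = length ps - 1" using i by simp
    then show ?thesis using assms(2,3) by (simp add: nth_append last_conv_nth)
  qed
qed

lemma has_cycle_if_walk_returns:
  assumes "walk T ps" "distinct ps" "j + 3 \<le> length ps" "{last ps, ps ! j} \<in># T"
  shows "has_cycle T"
proof (rule has_cycle_if_closed_walk)
  show "distinct (drop j ps)" "3 \<le> length (drop j ps)" using assms(2,3) by auto
  show "walk T (drop j ps)" using assms(1) by (auto simp: walk_def add.commute)
  show "{last (drop j ps), hd (drop j ps)} \<in># T" using assms(3,4) by (simp add: hd_drop_conv_nth)
qed

lemma degree_last_le_1_if_unextendable:
  assumes edges: "\<forall>e\<in>#T. e \<subseteq> V \<and> card e = 2" and acyclic: "\<not> has_cycle T"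
    and path: "distinct ps" "walk T ps" "2 \<le> length ps"
    and unextendable: "\<forall>z\<in>V - set ps. {last ps, z} \<notin># T"
  shows "degree T (last ps) \<le> 1"
proof (rule ccontr)
  have "ps \<noteq> []" using path(3) by auto
  define l where "l = last ps"
  define p where "p = ps ! (length ps - 2)"
  have "Suc (length ps - 2) < length ps" "Suc (length ps - 2) = length ps - 1" using path(3) by auto
  then have pl: "{p, l} \<in># T"
    using path(2) unfolding walk_def p_def l_def last_conv_nth[OF \<open>ps \<noteq> []\<close>] by metis
  have "p \<noteq> l" using path(1,3) unfolding p_def l_def last_conv_nth[OF \<open>ps \<noteq> []\<close>]
    by (simp add: nth_eq_iff_index_eq)
  let ?F = "filter_mset (\<lambda>e. l \<in> e) T"
  assume "\<not> degree T (last ps) \<le> 1"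
  then have "1 \<le> size (?F - {#{p, l}#})" using pl by (simp add: degree_def size_Diff_submset l_def)
  then obtain e where e: "e \<in># ?F - {#{p, l}#}"
    by (metis multiset_nonemptyE not_one_le_zero size_empty)
  then have "e \<in># T" "l \<in> e" by (auto dest: in_diffD)
  then obtain z where ez: "e = {l, z}" "z \<noteq> l" using card2_other_element[of e l] edges by blast
  then have "z \<in> V" using edges \<open>e \<in># T\<close> by auto
  consider "z = p" | "z \<notin> set ps" | "z \<in> set ps" "z \<noteq> p" by blast
  then show False
  proof cases
    case 1
    then have "e = {p, l}" using ez by (simp add: insert_commute)
    then have "{#{p, l}, {p, l}#} \<subseteq># ?F" using e pl
      by (simp only: insert_subset_eq_iff) simp
    then have "{#{p, l}, {p, l}#} \<subseteq># T"
      using multiset_filter_subset subset_mset.order_trans by blast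
    then show False using has_cycle_if_parallel_edges[OF \<open>p \<noteq> l\<close>] acyclic by blast
  next
    case 2
    then show False using unextendable \<open>z \<in> V\<close> \<open>e \<in># T\<close> ez l_def by auto
  next
    case 3
    then obtain j where j: "j < length ps" "ps ! j = z" by (auto simp: in_set_conv_nth)
    have "j \<noteq> length ps - 1" "j \<noteq> length ps - 2"
      using j 3(2) ez(2) unfolding p_def l_def last_conv_nth[OF \<open>ps \<noteq> []\<close>] by auto
    then have "j + 3 \<le> length ps" using j(1) by linarith
    moreover have "{last ps, ps ! j} \<in># T" using \<open>e \<in># T\<close> ez j l_def by simp
    ultimately show False using has_cycle_if_walk_returns[OF path(2,1)] acyclic by blast
  qed
qed

lemma tree_has_leaf:
  assumes tree: "is_tree V T" and "2 \<le> card V"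
  shows "\<exists>x\<in>V. degree T x \<le> 1"
proof -
  have fin: "finite V" and edges: "\<forall>e\<in>#T. e \<subseteq> V \<and> card e = 2"
    and conn: "connected_mg V T" and acyclic: "\<not> has_cycle T"
    using tree unfolding is_tree_def multigraph_def by auto
  define P where "P ps \<longleftrightarrow> distinct ps \<and> set ps \<subseteq> V \<and> walk T ps" for ps
  obtain x where x: "x \<in> V" using assms(2) by fastforce
  obtain y where "y \<in> V" "y \<noteq> x" using exists_other_vertex[OF assms(2) x] by blast
  then obtain z where z: "{x, z} \<in># T"
    using connected_mg_edge_at[OF conn x] by blast
  then have "z \<noteq> x" "z \<in> V" using edges by (auto simp: card_2_iff)
  then have P2: "P [x, z]" using x z by (simp add: P_def walk_def less_Suc_eq)
  have "\<forall>ps. P ps \<longrightarrow> length ps < card V + 1"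
    using fin by (auto simp: P_def distinct_card[symmetric] intro: card_mono le_imp_less_Suc)
  then obtain ps where ps: "P ps" and longest: "\<forall>qs. P qs \<longrightarrow> length qs \<le> length ps"
    using ex_has_greatest_nat[of P "[x, z]" length "card V + 1"] P2 by blast
  have "2 \<le> length ps" using longest P2 by fastforce
  have path: "distinct ps" "set ps \<subseteq> V" "walk T ps" "ps \<noteq> []"
    using ps \<open>2 \<le> length ps\<close> by (auto simp: P_def)
  have "\<forall>z\<in>V - set ps. {last ps, z} \<notin># T"
  proof (intro ballI notI)
    fix z assume "z \<in> V - set ps" "{last ps, z} \<in># T"
    then have "P (ps @ [z])" using path walk_snoc by (simp add: P_def)
    then show False using longest by fastforce
  qed
  then have "degree T (last ps) \<le> 1"
    using degree_last_le_1_if_unextendable[OF edges acyclic path(1,3)] \<open>2 \<le> length ps\<close> by blast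
  moreover have "last ps \<in> V" using path(2,4) by auto
  ultimately show ?thesis by blast
qed

lemma tree_delete_leaf:
  assumes tree: "is_tree V T" and x: "x \<in> V" "degree T x \<le> 1" and "2 \<le> card V"
  shows "is_tree (V - {x}) (filter_mset (\<lambda>e. x \<notin> e) T)"
  unfolding is_tree_def
proof (intro conjI)
  have fin: "finite V" and edges: "\<forall>e\<in>#T. e \<subseteq> V \<and> card e = 2"
    and conn: "connected_mg V T" and nc: "\<not> has_cycle T"
    using tree unfolding is_tree_def multigraph_def by auto
  show "multigraph (V - {x}) (filter_mset (\<lambda>e. x \<notin> e) T)"
    using fin edges unfolding multigraph_def by auto
  show "V - {x} \<noteq> {}" using exists_other_vertex[OF assms(4) x(1)] by blast
  show "\<not> has_cycle (filter_mset (\<lambda>e. x \<notin> e) T)"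
    using nc has_cycle_mono multiset_filter_subset by blast
  show "connected_mg (V - {x}) (filter_mset (\<lambda>e. x \<notin> e) T)"
  proof (rule connected_mg_restrict[OF conn])
    show "\<forall>e\<in>#T. e \<subseteq> V" "V - {x} \<subseteq> V" using edges by auto
  next
    fix p q assume "p \<in> V - {x}" "q \<in> V - {x}" "{p, q} \<in># T"
    then show "(p, q) \<in> (adjacent (filter_mset (\<lambda>e. x \<notin> e) T))\<^sup>*" by auto
  next
    fix p q z assume pq: "p \<in> V - {x}" "q \<in> V - {x}" "z \<in> V - (V - {x})" "{p, z} \<in># T" "{z, q} \<in># T"
    have "p = q"
    proof (rule ccontr)
      assume "p \<noteq> q"
      then have "{p, z} \<noteq> {z, q}" using pq by (auto simp: doubleton_eq_iff)
      then have "2 \<le> degree T x"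
        unfolding degree_def using pq by (intro two_le_size_if_distinct_members) auto
      then show False using x(2) by simp
    qed
    then show "(p, q) \<in> (adjacent (filter_mset (\<lambda>e. x \<notin> e) T))\<^sup>*" by simp
  next
    fix z1 z2 assume "z1 \<in> V - (V - {x})" "z2 \<in> V - (V - {x})"
    then have "card {z1, z2} = 1" by auto
    then show "{z1, z2} \<notin># T" using edges by force
  qed
qed

lemma tree_size_less_card: "is_tree V T \<Longrightarrow> size T < card V"
proof (induction "card V" arbitrary: V T rule: less_induct)
  case less
  have fin: "finite V" and edges: "\<forall>e\<in>#T. e \<subseteq> V \<and> card e = 2" and "V \<noteq> {}"
    using less.prems unfolding is_tree_def multigraph_def by auto
  show ?case
  proof (cases "2 \<le> card V")
    case False
    have "T = {#}"
    proof (rule ccontr)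
      assume "T \<noteq> {#}"
      then obtain e where "e \<in># T" by (meson multiset_nonemptyE)
      then have "2 \<le> card V" using edges card_mono[OF fin] by metis
      then show False using False by simp
    qed
    then show ?thesis using \<open>V \<noteq> {}\<close> fin by (simp add: card_gt_0_iff)
  next
    case True
    obtain x where x: "x \<in> V" "degree T x \<le> 1" using tree_has_leaf[OF less.prems True] by blast
    have "size (filter_mset (\<lambda>e. x \<notin> e) T) < card (V - {x})"
      using less.hyps tree_delete_leaf[OF less.prems x True] x(1) fin
      by (meson card_Diff1_less)
    then show ?thesis
      using size_eq_size_avoiding_plus_degree[of T x] x fin by (simp add: card_Diff_singleton)
  qed
qed

lemma two_le_card_if_z2_symmetric:
  assumes "z2_symmetric V E s"
  shows "2 \<le> card V"
proof -
  obtain x where x: "x \<in> V" "s x \<noteq> x" and "finite V" "s x \<in> V"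
    using assms unfolding z2_symmetric_def automorphism_def multigraph_def
    by (auto dest: bij_betwE)
  then have "card {x, s x} \<le> card V" by (intro card_mono) auto
  then show ?thesis using x(2) by simp
qed

lemma exists_moved_vertex_of_low_degree:
  assumes trees: "is_tree V T1" "is_tree V T2" and "2 \<le> card V"
    and invariant: "image_mset ((`) s) T1 = T1" "image_mset ((`) s) T2 = T2"
    and no_fixed: "\<forall>e\<in>#T1 + T2. s ` e \<noteq> e"
  obtains v where "v \<in> V" "s v \<noteq> v" "1 \<le> degree T1 v" "1 \<le> degree T2 v"
    "degree T1 v + degree T2 v \<le> 3"
proof -
  have fin: "finite V" using trees(1) by (simp add: is_tree_def multigraph_def)
  have "(\<Sum>x\<in>V. degree T1 x) = 2 * size T1" "(\<Sum>x\<in>V. degree T2 x) = 2 * size T2"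
    using sum_degree_eq_twice_size[OF fin] trees unfolding is_tree_def multigraph_def by blast+
  then have sum: "(\<Sum>x\<in>V. degree T1 x + degree T2 x) < card V * 4"
    using tree_size_less_card[OF trees(1)] tree_size_less_card[OF trees(2)]
    by (simp add: sum.distrib)
  have "\<not> (\<forall>x\<in>V. 4 \<le> degree T1 x + degree T2 x)"
  proof
    assume "\<forall>x\<in>V. 4 \<le> degree T1 x + degree T2 x"
    then have "card V * 4 \<le> (\<Sum>x\<in>V. degree T1 x + degree T2 x)"
      using sum_bounded_below[of V 4 "\<lambda>x. degree T1 x + degree T2 x"] by simp
    then show False using sum by simp
  qed
  then obtain v where v: "v \<in> V" "degree T1 v + degree T2 v < 4" by (auto simp: not_le)
  moreover have "1 \<le> degree T1 v" "1 \<le> degree T2 v"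
    using tree_degree_ge_1[OF trees(1) v(1) \<open>2 \<le> card V\<close>]
      tree_degree_ge_1[OF trees(2) v(1) \<open>2 \<le> card V\<close>] by simp_all
  moreover have "s v \<noteq> v"
  proof
    assume "s v = v"
    moreover have "\<forall>e\<in>#T1. s ` e \<noteq> e" "\<forall>e\<in>#T2. s ` e \<noteq> e" using no_fixed by auto
    ultimately have "2 \<le> degree T1 v" "2 \<le> degree T2 v"
      using degree_ge_2_if_fixed[OF invariant(1)] degree_ge_2_if_fixed[OF invariant(2)]
        \<open>1 \<le> degree T1 v\<close> \<open>1 \<le> degree T2 v\<close> by simp_all
    then show False using v(2) by linarith
  qed
  ultimately show ?thesis using that by auto
qed

locale moved_vertex =
  fixes V :: "'v set" and s :: "'v \<Rightarrow> 'v" and v :: 'v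
  assumes finite: "finite V" and bij: "bij_betw s V V" and involution: "\<forall>x\<in>V. s (s x) = x"
    and v_in: "v \<in> V" and v_moved: "s v \<noteq> v"
begin

abbreviation "w \<equiv> s v"
abbreviation "W \<equiv> V - {v, w}"

definition delete_pair :: "'v set multiset \<Rightarrow> 'v set multiset" where
  "delete_pair T = filter_mset (\<lambda>e. v \<notin> e \<and> w \<notin> e) T"

lemma w_in: "w \<in> V" using bij v_in by (meson bij_betwE)

lemma s_w: "s w = v" using involution v_in by blast

lemma s_in: "x \<in> V \<Longrightarrow> s x \<in> V" using bij by (meson bij_betwE)

lemma s_inj:
  assumes "x \<in> V" "y \<in> V" "s x = s y"
  shows "x = y"
proof -
  have "x = s (s x)" using involution assms(1) by simp
  also have "\<dots> = s (s y)" using assms(3) by simp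
  also have "\<dots> = y" using involution assms(2) by simp
  finally show ?thesis .
qed

lemma s_in_W: "x \<in> W \<Longrightarrow> s x \<in> W"
proof -
  assume x: "x \<in> W"
  then have "s x \<noteq> w" using s_inj v_in by blast
  moreover have "s x \<noteq> v"
  proof
    assume "s x = v"
    then have "x = w" using involution x by force
    then show False using x by blast
  qed
  ultimately show ?thesis using x s_in by blast
qed

lemma bij_betw_W: "bij_betw s W W"
  using involution s_in_W by (intro bij_betw_byWitness[where f' = s]) auto

lemma involution_W: "\<forall>x\<in>W. s (s x) = x" using involution by blast

end

locale sym_tree = moved_vertex V s v for V :: "'v set" and s v +
  fixes T :: "'v set multiset"
  assumes tree: "is_tree V T" and invariant: "image_mset ((`) s) T = T"
    and no_fixed: "\<forall>e\<in>#T. s ` e \<noteq> e"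
begin

lemma edges: "\<forall>e\<in>#T. e \<subseteq> V \<and> card e = 2"
  using tree by (simp add: is_tree_def multigraph_def)

lemma acyclic: "\<not> has_cycle T" using tree by (simp add: is_tree_def)

lemma not_adjacent_v_w: "e \<in># T \<Longrightarrow> v \<in> e \<Longrightarrow> w \<in> e \<Longrightarrow> False"
proof -
  assume e: "e \<in># T" "v \<in> e" "w \<in> e"
  have "card e = 2" using edges e(1) by blast
  then obtain z where "e = {v, z}" "z \<noteq> v" using card2_other_element[OF _ e(2)] by blast
  then have "e = {v, w}" using e v_moved by auto
  then have "s ` e = e" using s_w by auto
  then show False using no_fixed e by blast
qed

lemma w_in_image_iff: "e \<in># T \<Longrightarrow> w \<in> s ` e \<longleftrightarrow> v \<in> e"
proof
  assume e: "e \<in># T" and "w \<in> s ` e"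
  then obtain y where "y \<in> e" "s v = s y" by auto
  moreover have "y \<in> V" using e \<open>y \<in> e\<close> edges by blast
  ultimately show "v \<in> e" using s_inj v_in by metis
qed auto

lemma v_in_image_iff: "e \<in># T \<Longrightarrow> v \<in> s ` e \<longleftrightarrow> w \<in> e"
proof
  assume e: "e \<in># T" and "v \<in> s ` e"
  then obtain y where "y \<in> e" "v = s y" by auto
  moreover have "y \<in> V" using e \<open>y \<in> e\<close> edges by blast
  ultimately show "w \<in> e" using involution by simp
next
  assume "w \<in> e"
  then show "v \<in> s ` e" using s_w by force
qed

lemma edges_at_w:
  "filter_mset (\<lambda>e. w \<in> e) T = image_mset ((`) s) (filter_mset (\<lambda>e. v \<in> e) T)"
proof -
  have "filter_mset (\<lambda>e. w \<in> e) T = filter_mset (\<lambda>e. w \<in> e) (image_mset ((`) s) T)"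
    using invariant by simp
  also have "\<dots> = image_mset ((`) s) (filter_mset (\<lambda>e. w \<in> s ` e) T)"
    by (rule filter_mset_image_mset)
  also have "filter_mset (\<lambda>e. w \<in> s ` e) T = filter_mset (\<lambda>e. v \<in> e) T"
    using w_in_image_iff by (metis (no_types, lifting) filter_mset_cong)
  finally show ?thesis .
qed

lemma split_at_pair:
  "T = delete_pair T + filter_mset (\<lambda>e. v \<in> e) T + filter_mset (\<lambda>e. w \<in> e) T"
proof -
  have "T = filter_mset (\<lambda>e. v \<in> e) T + filter_mset (\<lambda>e. v \<notin> e) T"
    by (rule multiset_partition)
  moreover have "filter_mset (\<lambda>e. v \<notin> e) T =
      filter_mset (\<lambda>e. w \<in> e) (filter_mset (\<lambda>e. v \<notin> e) T) +
      filter_mset (\<lambda>e. w \<notin> e) (filter_mset (\<lambda>e. v \<notin> e) T)"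
    by (rule multiset_partition)
  moreover have "filter_mset (\<lambda>e. w \<in> e) (filter_mset (\<lambda>e. v \<notin> e) T) = filter_mset (\<lambda>e. w \<in> e) T"
    unfolding filter_filter_mset by (rule filter_mset_cong) (auto dest: not_adjacent_v_w)
  moreover have "filter_mset (\<lambda>e. w \<notin> e) (filter_mset (\<lambda>e. v \<notin> e) T) = delete_pair T"
    unfolding filter_filter_mset delete_pair_def by (rule filter_mset_cong) auto
  ultimately show ?thesis by (metis add.commute union_assoc)
qed

lemma delete_pair_subseteq: "delete_pair T \<subseteq># T"
  by (simp add: delete_pair_def)

lemma delete_pair_edges: "\<forall>e\<in>#delete_pair T. e \<subseteq> W \<and> card e = 2"
  using edges by (auto simp: delete_pair_def)

lemma delete_pair_no_fixed: "\<forall>e\<in>#delete_pair T. s ` e \<noteq> e"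
  using no_fixed delete_pair_subseteq by (meson mset_subset_eqD)

lemma delete_pair_invariant: "image_mset ((`) s) (delete_pair T) = delete_pair T"
proof -
  have "image_mset ((`) s) (delete_pair T) =
      image_mset ((`) s) (filter_mset (\<lambda>e. v \<notin> s ` e \<and> w \<notin> s ` e) T)"
    unfolding delete_pair_def using w_in_image_iff v_in_image_iff
    by (metis (no_types, lifting) filter_mset_cong)
  also have "\<dots> = filter_mset (\<lambda>e. v \<notin> e \<and> w \<notin> e) (image_mset ((`) s) T)"
    by (rule image_mset_filter_mset_swap)
  finally show ?thesis using invariant by (simp add: delete_pair_def)
qed

lemma edge_at_v: "e \<in># T \<Longrightarrow> v \<in> e \<Longrightarrow> \<exists>u. e = {v, u} \<and> u \<in> W"
proof -
  assume e: "e \<in># T" "v \<in> e"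
  have "card e = 2" using edges e(1) by blast
  then obtain u where u: "e = {v, u}" "u \<noteq> v" using card2_other_element[OF _ e(2)] by blast
  then have "u \<in> V" "u \<noteq> w" using edges e not_adjacent_v_w by auto
  then show ?thesis using u by blast
qed

lemma tree_on_W_if_bypassed:
  assumes "\<forall>e\<in>#Tr. e \<subseteq> W \<and> card e = 2" "W \<noteq> {}" "\<not> has_cycle Tr"
    and "delete_pair T \<subseteq># Tr"
    and bypass: "\<And>p q z. p \<in> W \<Longrightarrow> q \<in> W \<Longrightarrow> z \<in> {v, w} \<Longrightarrow> {p, z} \<in># T \<Longrightarrow> {z, q} \<in># T
       \<Longrightarrow> (p, q) \<in> (adjacent Tr)\<^sup>*"
  shows "is_tree W Tr"
  unfolding is_tree_def
proof (intro conjI)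
  show "multigraph W Tr" using assms(1) finite by (simp add: multigraph_def)
  show "W \<noteq> {}" "\<not> has_cycle Tr" using assms(2,3) by auto
  show "connected_mg W Tr"
  proof (rule connected_mg_restrict)
    show "connected_mg V T" using tree by (simp add: is_tree_def)
    show "\<forall>e\<in>#T. e \<subseteq> V" "W \<subseteq> V" using edges by auto
  next
    fix p q assume "p \<in> W" "q \<in> W" "{p, q} \<in># T"
    then have "{p, q} \<in># Tr" using assms(4) by (auto simp: delete_pair_def dest: mset_subset_eqD)
    then show "(p, q) \<in> (adjacent Tr)\<^sup>*" by auto
  next
    fix p q z assume "p \<in> W" "q \<in> W" "z \<in> V - W" "{p, z} \<in># T" "{z, q} \<in># T"
    then show "(p, q) \<in> (adjacent Tr)\<^sup>*" using bypass by blast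
  next
    fix z1 z2 assume z: "z1 \<in> V - W" "z2 \<in> V - W"
    show "{z1, z2} \<notin># T"
    proof
      assume "{z1, z2} \<in># T"
      moreover have "card {z1, z2} = 2" using calculation edges by blast
      ultimately show False using z not_adjacent_v_w by auto
    qed
  qed
qed

lemma single_neighbour:
  assumes "filter_mset (\<lambda>e. z \<in> e) T = {#e#}" "{p, z} \<in># T" "{z, q} \<in># T"
  shows "p = q"
proof -
  have "{p, z} \<in># filter_mset (\<lambda>e. z \<in> e) T" "{z, q} \<in># filter_mset (\<lambda>e. z \<in> e) T"
    using assms(2,3) by auto
  then have "{p, z} = e" "{z, q} = e" using assms(1) by auto
  then show ?thesis by (auto simp: doubleton_eq_iff)
qed

lemma remove_leaf_orbit:
  assumes "degree T v = 1"
  shows "\<exists>u\<in>W. T = delete_pair T + edge_orbit s {v, u} \<and> is_tree W (delete_pair T)"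
proof -
  obtain e where F: "filter_mset (\<lambda>e. v \<in> e) T = {#e#}"
    using assms size_1_singleton_mset unfolding degree_def by blast
  then have "e \<in># filter_mset (\<lambda>e. v \<in> e) T" by simp
  then have "e \<in># T" "v \<in> e" by auto
  then obtain u where u: "e = {v, u}" "u \<in> W" using edge_at_v by blast
  have Fw: "filter_mset (\<lambda>e. w \<in> e) T = {#s ` e#}" using F edges_at_w by simp
  have "T = delete_pair T + edge_orbit s {v, u}"
    using split_at_pair unfolding F Fw u(1) by (simp add: add_mset_commute)
  moreover have "is_tree W (delete_pair T)"
  proof (rule tree_on_W_if_bypassed)
    show "\<forall>e\<in>#delete_pair T. e \<subseteq> W \<and> card e = 2" by (rule delete_pair_edges)
    show "W \<noteq> {}" using u by blast
    show "\<not> has_cycle (delete_pair T)" using acyclic has_cycle_mono delete_pair_subseteq by blast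
    fix p q z assume "p \<in> W" "q \<in> W" "z \<in> {v, w}" "{p, z} \<in># T" "{z, q} \<in># T"
    then have "p = q" using single_neighbour[OF F] single_neighbour[OF Fw] by blast
    then show "(p, q) \<in> (adjacent (delete_pair T))\<^sup>*" by simp
  qed simp
  ultimately show ?thesis using u(2) by blast
qed


lemma degree_two_neighbours:
  assumes "degree T v = 2"
  obtains a b where "a \<in> W" "b \<in> W" "a \<noteq> b"
    "filter_mset (\<lambda>e. v \<in> e) T = {#{v, a}, {v, b}#}"
    "filter_mset (\<lambda>e. w \<in> e) T = {#{w, s a}, {w, s b}#}"
proof -
  let ?F = "filter_mset (\<lambda>e. v \<in> e) T"
  have size: "size ?F = 2" using assms by (simp add: degree_def)
  then obtain e1 where e1: "e1 \<in># ?F" by (metis multiset_nonemptyE size_empty zero_neq_numeral)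
  have "size (?F - {#e1#}) = 1" using size e1 by (simp add: size_Diff_submset)
  then obtain e2 where "?F - {#e1#} = {#e2#}" using size_1_singleton_mset by blast
  then have F: "?F = {#e1, e2#}" using e1 by (metis insert_DiffM)
  have "e1 \<in># ?F" "e2 \<in># ?F" using F by simp_all
  then have "e1 \<in># T" "v \<in> e1" "e2 \<in># T" "v \<in> e2" by auto
  then obtain a b where ab: "e1 = {v, a}" "a \<in> W" "e2 = {v, b}" "b \<in> W"
    using edge_at_v by meson
  have "a \<noteq> b"
  proof
    assume "a = b"
    then have "{#{v, a}, {v, a}#} \<subseteq># T" using F ab by (metis multiset_filter_subset)
    moreover have "v \<noteq> a" using ab by blast
    ultimately show False using has_cycle_if_parallel_edges acyclic by metis
  qed
  moreover have "filter_mset (\<lambda>e. w \<in> e) T = {#{w, s a}, {w, s b}#}"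
    using F ab edges_at_w by simp
  ultimately show ?thesis using that F ab by simp
qed

lemma delete_pair_degree_two:
  assumes "filter_mset (\<lambda>e. v \<in> e) T = {#{v, a}, {v, b}#}"
    and "filter_mset (\<lambda>e. w \<in> e) T = {#{w, s a}, {w, s b}#}"
  shows "T = delete_pair T + edge_orbit s {v, a} + edge_orbit s {v, b}"
proof -
  have "T = delete_pair T + {#{v, a}, {v, b}#} + {#{w, s a}, {w, s b}#}"
    using split_at_pair unfolding assms .
  then show ?thesis by (simp add: add_mset_commute)
qed

lemma spliced_edge_not_fixed:
  assumes "a \<in> W" "b \<in> W" "a \<noteq> b"
    and F: "filter_mset (\<lambda>e. v \<in> e) T = {#{v, a}, {v, b}#}"
    and Fw: "filter_mset (\<lambda>e. w \<in> e) T = {#{w, s a}, {w, s b}#}"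
  shows "s ` {a, b} \<noteq> {a, b}"
proof
  assume "s ` {a, b} = {a, b}"
  then consider "s a = a" "s b = b" | "s a = b" "s b = a" by (auto simp: doubleton_eq_iff)
  moreover have "{v, a} \<in># filter_mset (\<lambda>e. v \<in> e) T" "{v, b} \<in># filter_mset (\<lambda>e. v \<in> e) T"
    "{w, s a} \<in># filter_mset (\<lambda>e. w \<in> e) T" "{w, s b} \<in># filter_mset (\<lambda>e. w \<in> e) T"
    unfolding F Fw by simp_all
  ultimately have edges: "{v, a} \<in># T" "{a, w} \<in># T" "{w, b} \<in># T" "{b, v} \<in># T"
    by (cases; simp add: insert_commute)+
  have "walk T [v, a, w, b]"
    unfolding walk_def
  proof (intro allI impI)
    fix i assume "Suc i < length [v, a, w, b]"
    then have "i = 0 \<or> i = 1 \<or> i = 2" by auto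
    then show "{[v, a, w, b] ! i, [v, a, w, b] ! Suc i} \<in># T" using edges by auto
  qed
  moreover have "distinct [v, a, w, b]" using assms(1-3) v_moved by auto
  ultimately have "has_cycle T"
    using has_cycle_if_closed_walk[of "[v, a, w, b]"] edges(4) by simp
  then show False using acyclic by blast
qed

lemma spliced_acyclic:
  assumes "a \<in> W" "b \<in> W"
    and T: "T = delete_pair T + edge_orbit s {v, a} + edge_orbit s {v, b}"
  shows "\<not> has_cycle (delete_pair T + edge_orbit s {a, b})"
proof
  assume "has_cycle (delete_pair T + edge_orbit s {a, b})"
  then obtain cs where cs: "2 \<le> length cs" "distinct cs"
    "mset (cycle_edges cs) \<subseteq># (delete_pair T + {#s ` {a, b}#}) + {#{a, b}#}"
    unfolding has_cycle_iff_cycle_edges by (auto simp: add_mset_commute)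
  have "\<forall>e\<in>#delete_pair T + {#s ` {a, b}#} + {#{a, b}#}. e \<subseteq> W"
    using delete_pair_edges s_in_W assms(1,2) by auto
  then have "set cs \<subseteq> W" using set_subset_if_cycle_edges_subseteq cs(3) by blast
  \<comment> \<open>subdivide ab by v and then s a s b by w to obtain a cycle of T\<close>
  then obtain cs1 where cs1: "2 \<le> length cs1" "distinct cs1" "set cs1 \<subseteq> insert v (set cs)"
    "mset (cycle_edges cs1) \<subseteq># (delete_pair T + {#{v, a}, {v, b}#}) + {#{s a, s b}#}"
    using cycle_through_subdivision[OF cs] by (fastforce simp: add_mset_commute)
  have "w \<notin> set cs1" using cs1(3) \<open>set cs \<subseteq> W\<close> v_moved by auto
  then obtain cs2 where "2 \<le> length cs2" "distinct cs2"
    "mset (cycle_edges cs2) \<subseteq># (delete_pair T + {#{v, a}, {v, b}#}) + {#{w, s a}, {w, s b}#}"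
    using cycle_through_subdivision[OF cs1(1,2,4)] by blast
  moreover have "(delete_pair T + {#{v, a}, {v, b}#}) + {#{w, s a}, {w, s b}#} = T"
    using T by (simp add: add_mset_commute)
  ultimately have "has_cycle T" unfolding has_cycle_iff_cycle_edges by metis
  then show False using acyclic by blast
qed

lemma adjacent_rtrancl_if_in_edge:
  "p \<in> {x, y} \<Longrightarrow> q \<in> {x, y} \<Longrightarrow> {x, y} \<in># Tr \<Longrightarrow> (p, q) \<in> (adjacent Tr)\<^sup>*"
  by (cases "p = q") (auto simp: insert_commute)

lemma spliced_tree:
  assumes ab: "a \<in> W" "b \<in> W" "a \<noteq> b"
    and F: "filter_mset (\<lambda>e. v \<in> e) T = {#{v, a}, {v, b}#}"
    and Fw: "filter_mset (\<lambda>e. w \<in> e) T = {#{w, s a}, {w, s b}#}"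
  shows "is_tree W (delete_pair T + edge_orbit s {a, b})"
proof -
  let ?Tr = "delete_pair T + edge_orbit s {a, b}"
  have "s a \<noteq> s b" using s_inj ab by blast
  then have "\<forall>e\<in>#?Tr. e \<subseteq> W \<and> card e = 2" using delete_pair_edges s_in_W ab by auto
  then show ?thesis
  proof (rule tree_on_W_if_bypassed)
    show "W \<noteq> {}" using ab by blast
    show "\<not> has_cycle ?Tr" using spliced_acyclic[OF ab(1,2) delete_pair_degree_two[OF F Fw]] .
    fix p q z assume pq: "p \<in> W" "q \<in> W" "z \<in> {v, w}" "{p, z} \<in># T" "{z, q} \<in># T"
    show "(p, q) \<in> (adjacent ?Tr)\<^sup>*"
    proof (cases "z = v")
      case True
      then have "{p, v} \<in># filter_mset (\<lambda>e. v \<in> e) T" "{v, q} \<in># filter_mset (\<lambda>e. v \<in> e) T"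
        using pq by auto
      then have "p \<in> {a, b}" "q \<in> {a, b}" unfolding F using pq(1,2) by (auto simp: doubleton_eq_iff)
      then show ?thesis by (rule adjacent_rtrancl_if_in_edge) simp
    next
      case False
      then have "{p, w} \<in># filter_mset (\<lambda>e. w \<in> e) T" "{w, q} \<in># filter_mset (\<lambda>e. w \<in> e) T"
        using pq by auto
      then have "p \<in> {s a, s b}" "q \<in> {s a, s b}" unfolding Fw using pq(1,2)
        by (auto simp: doubleton_eq_iff)
      then show ?thesis by (rule adjacent_rtrancl_if_in_edge) simp
    qed
  qed simp
qed

lemma spliced_symmetric:
  assumes "a \<in> W" "b \<in> W" and not_fixed: "s ` {a, b} \<noteq> {a, b}"
  shows "image_mset ((`) s) (delete_pair T + edge_orbit s {a, b}) = delete_pair T + edge_orbit s {a, b}"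
    and "\<forall>e\<in>#delete_pair T + edge_orbit s {a, b}. s ` e \<noteq> e"
proof -
  have image: "s ` (s ` {a, b}) = {a, b}" using involution assms(1,2) by simp
  then show "image_mset ((`) s) (delete_pair T + edge_orbit s {a, b}) = delete_pair T + edge_orbit s {a, b}"
    using delete_pair_invariant by (simp add: add_mset_commute)
  show "\<forall>e\<in>#delete_pair T + edge_orbit s {a, b}. s ` e \<noteq> e"
    using delete_pair_no_fixed not_fixed image by auto
qed

lemma splice_orbit:
  assumes "degree T v = 2"
  shows "\<exists>a\<in>W. \<exists>b\<in>W. T = delete_pair T + edge_orbit s {v, a} + edge_orbit s {v, b} \<and>
     is_tree W (delete_pair T + edge_orbit s {a, b}) \<and>
     image_mset ((`) s) (delete_pair T + edge_orbit s {a, b}) = delete_pair T + edge_orbit s {a, b} \<and>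
     (\<forall>e\<in>#delete_pair T + edge_orbit s {a, b}. s ` e \<noteq> e)"
proof -
  obtain a b where ab: "a \<in> W" "b \<in> W" "a \<noteq> b"
    and F: "filter_mset (\<lambda>e. v \<in> e) T = {#{v, a}, {v, b}#}"
    and Fw: "filter_mset (\<lambda>e. w \<in> e) T = {#{w, s a}, {w, s b}#}"
    using degree_two_neighbours[OF assms] by blast
  then show ?thesis
    using delete_pair_degree_two[OF F Fw] spliced_tree[OF ab F Fw]
      spliced_symmetric[OF ab(1,2) spliced_edge_not_fixed[OF ab F Fw]] by blast
qed

end

lemma in_G2sym_if_sym_trees:
  assumes trees: "is_tree W A" "is_tree W B"
    and "image_mset ((`) s) A = A" "image_mset ((`) s) B = B"
    and no_fixed: "\<forall>e\<in>#A. s ` e \<noteq> e" "\<forall>e\<in>#B. s ` e \<noteq> e"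
    and "bij_betw s W W" "\<forall>x\<in>W. s (s x) = x"
  shows "in_G2sym (W, A + B, A, B, s)"
proof (cases "\<exists>x\<in>W. s x \<noteq> x")
  case True
  have "multigraph W (A + B)" using trees by (auto simp: is_tree_def multigraph_def)
  then show ?thesis using assms True
    by (auto simp: two_tree_decomp_def spanning_tree_def z2_symmetric_def automorphism_def
        no_fixed_edges_def)
next
  case False
  \<comment> \<open>s is trivial on W, so every edge would be fixed and both trees are edgeless\<close>
  have "e \<notin># A + B" for e
  proof
    assume e: "e \<in># A + B"
    then have "e \<subseteq> W" using trees by (auto simp: is_tree_def multigraph_def)
    then have "s ` e = e" using False by (metis (no_types, lifting) image_cong image_ident subsetD)
    then show False using e no_fixed by auto
  qed
  then have empty: "A = {#}" "B = {#}" by (meson multiset_nonemptyE union_iff)+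
  obtain x where x: "x \<in> W" using trees(1) by (auto simp: is_tree_def)
  have "y = x" if "y \<in> W" for y
  proof -
    have "(x, y) \<in> (adjacent A)\<^sup>*"
      using trees(1) x that unfolding is_tree_def connected_mg_def by blast
    then show ?thesis using empty by simp
  qed
  then have "W = {x}" using x by blast
  then show ?thesis using False empty by simp
qed

lemma sym_2tree_ext0_intro:
  assumes new: "v \<notin> W" "s v \<notin> W" "v \<noteq> s v" "V = W \<union> {v, s v}"
    and "u1 \<in> W" "u2 \<in> W" "T1 = A + edge_orbit s {v, u1}" "T2 = B + edge_orbit s {v, u2}"
  shows "sym_2tree_ext 0 (W, A + B, A, B, s) (V, T1 + T2, T1, T2, s)"
proof -
  have "sym_ext 0 2 v W (A + B) s V (T1 + T2) s"
    unfolding sym_ext_def sym_ext0_def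
    using assms by (intro disjI1 conjI exI[of _ "[u1, u2]"]) (auto simp: ac_simps)
  moreover have "sym_ext 0 1 v W A s V T1 s" "sym_ext 0 1 v W B s V T2 s"
    unfolding sym_ext_def sym_ext0_def
    using assms by (intro disjI1 conjI exI[of _ "[u1]"] exI[of _ "[u2]"]; simp)+
  ultimately show ?thesis by force
qed

lemma sym_2tree_ext1_intro:
  assumes new: "v \<notin> W" "s v \<notin> W" "v \<noteq> s v" "V = W \<union> {v, s v}"
    and "a \<in> W" "b \<in> W" "u \<in> W"
    and "T1 = A + edge_orbit s {v, a} + edge_orbit s {v, b}" "T2 = B + edge_orbit s {v, u}"
  shows "sym_2tree_ext 1 (W, A + edge_orbit s {a, b} + B, A + edge_orbit s {a, b}, B, s)
    (V, T1 + T2, T1, T2, s)"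
proof -
  have "A + edge_orbit s {a, b} + B - edge_orbit s {a, b} = A + B"
    by (metis add.assoc add.commute add_diff_cancel_right')
  then have "sym_ext 1 2 v W (A + edge_orbit s {a, b} + B) s V (T1 + T2) s"
    unfolding sym_ext_def sym_ext1_def
    using assms by (intro disjI2 conjI exI[of _ "[a, b, u]"]) (auto simp: ac_simps)
  moreover have "sym_ext 1 1 v W (A + edge_orbit s {a, b}) s V T1 s"
    unfolding sym_ext_def sym_ext1_def
    using assms by (intro disjI2 conjI exI[of _ "[a, b]"]) (auto simp: ac_simps)
  moreover have "sym_ext 0 1 v W B s V T2 s"
    unfolding sym_ext_def sym_ext0_def
    using assms by (intro disjI1 conjI exI[of _ "[u]"]) simp_all
  ultimately show ?thesis by force
qed

lemma sym_2tree_ext_swap: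
  "sym_2tree_ext j (V, E, T2, T1, s) (V', E', T2', T1', s') \<longleftrightarrow>
   sym_2tree_ext j (V, E, T1, T2, s) (V', E', T1', T2', s')"
  unfolding sym_2tree_ext.simps by (metis add.commute)

lemma in_G2sym_swap: "in_G2sym (V, E, T2, T1, s) \<longleftrightarrow> in_G2sym (V, E, T1, T2, s)"
  by (auto simp: two_tree_decomp_def add.commute)

lemma reducible_swap:
  assumes "\<exists>G. in_G2sym G \<and> (sym_2tree_ext 0 G (V, E, T2, T1, s) \<or> sym_2tree_ext 1 G (V, E, T2, T1, s))"
  shows "\<exists>G. in_G2sym G \<and> (sym_2tree_ext 0 G (V, E, T1, T2, s) \<or> sym_2tree_ext 1 G (V, E, T1, T2, s))"
proof -
  obtain W E0 A B s0 where "in_G2sym (W, E0, A, B, s0)"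
    "sym_2tree_ext 0 (W, E0, A, B, s0) (V, E, T2, T1, s) \<or>
     sym_2tree_ext 1 (W, E0, A, B, s0) (V, E, T2, T1, s)"
    using assms by (metis prod_cases5)
  then have "in_G2sym (W, E0, B, A, s0)"
    "sym_2tree_ext 0 (W, E0, B, A, s0) (V, E, T1, T2, s) \<or>
     sym_2tree_ext 1 (W, E0, B, A, s0) (V, E, T1, T2, s)"
    using in_G2sym_swap sym_2tree_ext_swap by blast+
  then show ?thesis by blast
qed

context moved_vertex
begin

lemma reducible_if_leaf_in_second:
  assumes "sym_tree V s v T1" "sym_tree V s v T2" "degree T1 v \<in> {1, 2}" "degree T2 v = 1"
  shows "\<exists>G. in_G2sym G \<and>
    (sym_2tree_ext 0 G (V, T1 + T2, T1, T2, s) \<or> sym_2tree_ext 1 G (V, T1 + T2, T1, T2, s))"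
proof -
  interpret t1: sym_tree V s v T1 by fact
  interpret t2: sym_tree V s v T2 by fact
  have new: "v \<notin> W" "s v \<notin> W" "v \<noteq> s v" "V = W \<union> {v, s v}" using v_in w_in v_moved by auto
  obtain u where u: "u \<in> W" "T2 = delete_pair T2 + edge_orbit s {v, u}" "is_tree W (delete_pair T2)"
    using t2.remove_leaf_orbit[OF assms(4)] by blast
  consider "degree T1 v = 1" | "degree T1 v = 2" using assms(3) by blast
  then show ?thesis
  proof cases
    case 1
    then obtain u1 where u1: "u1 \<in> W" "T1 = delete_pair T1 + edge_orbit s {v, u1}"
      "is_tree W (delete_pair T1)"
      using t1.remove_leaf_orbit by blast
    have "in_G2sym (W, delete_pair T1 + delete_pair T2, delete_pair T1, delete_pair T2, s)"
      using in_G2sym_if_sym_trees[OF u1(3) u(3)] t1.delete_pair_invariant t2.delete_pair_invariant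
        t1.delete_pair_no_fixed t2.delete_pair_no_fixed bij_betw_W involution_W by blast
    moreover have "sym_2tree_ext 0
        (W, delete_pair T1 + delete_pair T2, delete_pair T1, delete_pair T2, s) (V, T1 + T2, T1, T2, s)"
      using sym_2tree_ext0_intro[OF new u1(1) u(1) u1(2) u(2)] .
    ultimately show ?thesis by blast
  next
    case 2
    then obtain a b where ab: "a \<in> W" "b \<in> W"
      "T1 = delete_pair T1 + edge_orbit s {v, a} + edge_orbit s {v, b}"
      and tree: "is_tree W (delete_pair T1 + edge_orbit s {a, b})"
      and sym: "image_mset ((`) s) (delete_pair T1 + edge_orbit s {a, b}) =
        delete_pair T1 + edge_orbit s {a, b}"
        "\<forall>e\<in>#delete_pair T1 + edge_orbit s {a, b}. s ` e \<noteq> e"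
      using t1.splice_orbit by blast
    let ?A = "delete_pair T1 + edge_orbit s {a, b}"
    have "in_G2sym (W, ?A + delete_pair T2, ?A, delete_pair T2, s)"
      using in_G2sym_if_sym_trees[OF tree u(3) sym(1) t2.delete_pair_invariant sym(2)
          t2.delete_pair_no_fixed bij_betw_W involution_W] .
    moreover have "sym_2tree_ext 1 (W, ?A + delete_pair T2, ?A, delete_pair T2, s) (V, T1 + T2, T1, T2, s)"
      using sym_2tree_ext1_intro[OF new ab(1,2) u(1) ab(3) u(2)] .
    ultimately show ?thesis by blast
  qed
qed

lemma reducible_at_low_degree:
  assumes "sym_tree V s v T1" "sym_tree V s v T2"
    and "1 \<le> degree T1 v" "1 \<le> degree T2 v" "degree T1 v + degree T2 v \<le> 3"
  shows "\<exists>G. in_G2sym G \<and>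
    (sym_2tree_ext 0 G (V, T1 + T2, T1, T2, s) \<or> sym_2tree_ext 1 G (V, T1 + T2, T1, T2, s))"
proof (cases "degree T2 v = 1")
  case True
  moreover have "degree T1 v \<in> {1, 2}" using assms(3-5) True by auto
  ultimately show ?thesis using reducible_if_leaf_in_second[OF assms(1,2)] by blast
next
  case False
  then have "degree T2 v \<in> {1, 2}" "degree T1 v = 1" using assms(3-5) by auto
  from reducible_if_leaf_in_second[OF assms(2,1) this]
  show ?thesis unfolding add.commute[of T2 T1] by (rule reducible_swap)
qed

end

theorem theorem5p6:
  fixes G' :: "'v s2td"
  assumes "in_G2sym G'" and "\<not> is_K1 G'"
  shows "\<exists>G. in_G2sym G \<and> (sym_2tree_ext 0 G G' \<or> sym_2tree_ext 1 G G')"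
proof -
  obtain V E T1 T2 s where G': "G' = (V, E, T1, T2, s)" by (cases G')
  then have E: "E = T1 + T2" and trees: "is_tree V T1" "is_tree V T2"
    and z2: "z2_symmetric V E s"
    and invariant: "image_mset ((`) s) T1 = T1" "image_mset ((`) s) T2 = T2"
    and no_fixed: "\<forall>e\<in>#T1 + T2. s ` e \<noteq> e"
    using assms by (auto simp: two_tree_decomp_def spanning_tree_def no_fixed_edges_def)
  obtain v where v: "v \<in> V" "s v \<noteq> v" and degrees: "1 \<le> degree T1 v" "1 \<le> degree T2 v"
    "degree T1 v + degree T2 v \<le> 3"
    using exists_moved_vertex_of_low_degree[OF trees two_le_card_if_z2_symmetric[OF z2]
        invariant no_fixed] .
  interpret moved_vertex V s v
    using z2 v by unfold_locales (auto simp: z2_symmetric_def automorphism_def multigraph_def)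
  have "sym_tree V s v T1" "sym_tree V s v T2"
    using trees invariant no_fixed by unfold_locales auto
  then show ?thesis using reducible_at_low_degree[OF _ _ degrees] G' E by simp
qed

end
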